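(* Let $r$ be an odd positive integer, and let $n=2p_1^{\alpha_1}p_2^{\alpha_2}\cdots p_s^{\alpha_s}$ with $s\ge 1$, where $p_1<p_2<\cdots<p_s$ are odd primes and $\alpha_1,\ldots,\alpha_s$ are positive integers. Then $n\in G_r$ if and only if $n+r$ is composite and $p_s-r\neq 2p_1^{\alpha_1}p_2^{\alpha_2}\cdots p_{s-1}^{\alpha_{s-1}}$.
   Context: For a positive integer $r$, the $r$-th Schemmel totient function $S_r:\mathbb{N}\to\mathbb{N}_0$ is the multiplicative arithmetic function (so $S_r(1)=1$ and $S_r(ab)=S_r(a)S_r(b)$ for coprime $a,b$) defined on prime powers by $S_r(p^{\alpha})=0$ if $p\le r$ and $S_r(p^\alpha)=p^{\alpha-1}(p-r)$ if $p>r$, for all primes $p$ and positive integers $\alpha$. $G_r$ denotes the set of positive integers not in the range of $S_r$. For $s=1$ the empty product $p_1^{\alpha_1}\cdots p_{s-1}^{\alpha_{s-1}}$ equals $1$. *)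

theory Defs
  imports "HOL-Computational_Algebra.Primes"
begin

text \<open>The r-th Schemmel totient function, multiplicative, on prime powers
  S_r(p^a) = 0 if p \<le> r and p^(a-1)(p-r) otherwise; S_r(1) = 1.
  (Value at 0 is irrelevant; the domain is the positive integers.)\<close>
definition schemmel :: "nat \<Rightarrow> nat \<Rightarrow> nat" where
  "schemmel r n = (\<Prod>p\<in>prime_factors n.
      if p \<le> r then 0 else p ^ (multiplicity p n - 1) * (p - r))"

definition G :: "nat \<Rightarrow> nat set" where
  "G r = {m. m > 0 \<and> \<not> (\<exists>k>0. schemmel r k = m)}"

definition composite :: "nat \<Rightarrow> bool" where
  "composite m \<longleftrightarrow> m > 1 \<and> \<not> prime m"

end

theory Submission
  imports Defs
begin

text \<open>For odd r every odd prime factor of k contributes an even factor p^(a-1)(p-r) to S_r(k),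
  and the prime 2 contributes a power of 2. If n = 2 * (odd number with an odd prime factor) is
  a value, all factors but one must therefore be 1, so n = q^(b-1)(q-r) for a prime q > r.
  For b = 1 this says that n + r is prime. For b > 1, comparing with the factorisation of n shows
  q = p_s (a smaller q would leave p_s dividing q - r < q), and since q does not divide q - r the
  exponents match, leaving q - r = 2 p_1^a_1 ... p_(s-1)^a_(s-1).\<close>

definition schemmel_factor :: "nat \<Rightarrow> nat \<Rightarrow> nat \<Rightarrow> nat" where
  "schemmel_factor r k p = (if p \<le> r then 0 else p ^ (multiplicity p k - 1) * (p - r))"

lemma schemmel_eq_prod_factor: "schemmel r k = (\<Prod>p\<in>prime_factors k. schemmel_factor r k p)"
  unfolding schemmel_def schemmel_factor_def ..

lemma even_schemmel_factor:
  assumes "odd r" "odd p" "r < p"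
  shows "even (schemmel_factor r k p)"
  using assms by (simp add: schemmel_factor_def)

lemma schemmel_factor_two:
  assumes "odd r" "r < 2"
  shows "schemmel_factor r k 2 = 2 ^ (multiplicity 2 k - 1)"
proof -
  have "r = 1" using assms by presburger
  then show ?thesis by (simp add: schemmel_factor_def)
qed

lemma schemmel_prime_power:
  assumes "prime q" "r < q" "0 < b"
  shows "schemmel r (q ^ b) = q ^ (b - 1) * (q - r)"
proof -
  have "prime_factors (q ^ b) = {q}"
    using assms by (simp add: prime_factorization_prime_power)
  then show ?thesis
    using assms by (simp add: schemmel_def)
qed

lemma schemmel_eq_imp_prime_power_value:
  assumes "odd r" and p0: "prime p0" "odd p0" "p0 dvd n" and "\<not> 4 dvd n"
    and n: "schemmel r k = n" "0 < n"
  shows "\<exists>q b. prime q \<and> r < q \<and> 0 < b \<and> n = q ^ (b - 1) * (q - r)"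
proof -
  define f where "f = schemmel_factor r k"
  define PF where "PF = prime_factors k"
  have n_prod: "n = prod f PF"
    using n by (simp add: f_def PF_def schemmel_eq_prod_factor)
  have f_pos: "0 < f p" if "p \<in> PF" for p
    using n_prod \<open>0 < n\<close> that by (auto simp: PF_def)
  have gt_r: "r < p" if "p \<in> PF" for p
    using f_pos[OF that] by (auto simp: f_def schemmel_factor_def split: if_splits)
  have f_two: "f 2 = 2 ^ (multiplicity 2 k - 1)" if "2 \<in> PF"
    using schemmel_factor_two[OF \<open>odd r\<close> gt_r[OF that]] by (simp add: f_def)
  have odd_f_imp_two: "p = 2" if "p \<in> PF" "odd (f p)" for p
  proof -
    have "even p"
      using that even_schemmel_factor[OF \<open>odd r\<close> _ gt_r[OF that(1)]] by (auto simp: f_def)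
    moreover have "prime p"
      using that(1) by (simp add: PF_def in_prime_factors_imp_prime)
    ultimately show "p = 2"
      by (metis primes_dvd_imp_eq two_is_prime_nat)
  qed
  obtain q where q: "q \<in> PF" "p0 dvd f q"
    using p0 n_prod by (auto simp: PF_def prime_dvd_prod_iff)
  have "q \<noteq> 2"
  proof
    assume "q = 2"
    then have "p0 dvd 2"
      using q f_two p0(1) prime_dvd_power by metis
    then show False
      using p0 by (metis dvd_refl primes_dvd_imp_eq two_is_prime_nat)
  qed
  then have even_fq: "even (f q)"
    using odd_f_imp_two[OF q(1)] by blast
  define R where "R = prod f (PF - {q})"
  have n_split: "n = f q * R"
    using n_prod q(1) by (simp add: R_def PF_def prod.remove)
  \<comment> \<open>as n is not divisible by 4, no second factor can be even\<close>
  have "odd R"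
    using even_fq \<open>\<not> 4 dvd n\<close> n_split by (auto elim!: evenE)
  have "f p = 1" if "p \<in> PF - {q}" for p
  proof -
    have "odd (f p)"
      using \<open>odd R\<close> that dvd_prodI[of "PF - {q}" p f] by (auto simp: R_def PF_def dest: dvd_trans)
    then have "p = 2" using that odd_f_imp_two by blast
    then show "f p = 1" using \<open>odd (f p)\<close> f_two that by (simp add: power_0_left split: if_splits)
  qed
  then have "n = f q"
    using n_split by (simp add: R_def)
  moreover have "0 < multiplicity q k"
    using q(1) by (simp add: PF_def prime_factors_multiplicity)
  ultimately show ?thesis
    using q(1) gt_r[OF q(1)] by (auto simp: f_def schemmel_factor_def PF_def)
qed

lemma in_schemmel_range_iff:
  assumes "odd r" "prime p0" "odd p0" "p0 dvd n" "\<not> 4 dvd n" "0 < n"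
  shows "(\<exists>k>0. schemmel r k = n) \<longleftrightarrow>
    (\<exists>q b. prime q \<and> r < q \<and> 0 < b \<and> n = q ^ (b - 1) * (q - r))"
proof
  assume "\<exists>k>0. schemmel r k = n"
  then show "\<exists>q b. prime q \<and> r < q \<and> 0 < b \<and> n = q ^ (b - 1) * (q - r)"
    using schemmel_eq_imp_prime_power_value assms by blast
next
  assume "\<exists>q b. prime q \<and> r < q \<and> 0 < b \<and> n = q ^ (b - 1) * (q - r)"
  then obtain q b where "prime q" "r < q" "0 < b" "n = q ^ (b - 1) * (q - r)"
    by blast
  then show "\<exists>k>0. schemmel r k = n"
    by (intro exI[of _ "q ^ b"]) (simp add: schemmel_prime_power prime_gt_0_nat)
qed

lemma prime_power_mult_diff_eq:
  fixes p q r e a c :: nat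
  assumes "prime p" "prime q" "0 < r" "r < q" "0 < e" "0 < a"
    and c: "\<And>l. prime l \<Longrightarrow> l dvd c \<Longrightarrow> l < p"
    and eq: "q ^ e * (q - r) = p ^ a * c"
  shows "q = p \<and> q - r = c"
proof -
  have "q = p"
  proof (rule ccontr)
    assume "q \<noteq> p"
    then have coprime_powers: "\<not> q dvd p ^ a" "\<not> p dvd q ^ e"
      using assms(1,2) prime_dvd_power primes_dvd_imp_eq by blast+
    have "q dvd p ^ a * c"
      using eq \<open>0 < e\<close> by (metis dvd_mult2 dvd_power dvd_triv_left)
    then have "q < p"
      using c assms(2) coprime_powers(1) prime_dvd_mult_iff by blast
    have "p dvd q ^ e * (q - r)"
      using eq \<open>0 < a\<close> by (metis dvd_mult2 dvd_power dvd_triv_left)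
    then have "p dvd q - r"
      using assms(1) coprime_powers(2) prime_dvd_mult_iff by blast
    then have "p \<le> q - r"
      using \<open>r < q\<close> by (simp add: dvd_imp_le)
    then show False
      using \<open>q < p\<close> by linarith
  qed
  have "\<not> p dvd q - r"
    using \<open>q = p\<close> assms(3,4) by (auto dest: dvd_imp_le)
  moreover have "\<not> p dvd c"
    using c assms(1) by blast
  ultimately have "e = a"
    using eq assms(1) multiplicity_decomposeI[of "p ^ a * c" p e "q - r"]
      multiplicity_decomposeI[of "p ^ a * c" p a c]
    by (simp add: \<open>q = p\<close> prime_gt_0_nat)
  then show ?thesis
    using eq \<open>q = p\<close> assms(1) by (simp add: prime_gt_0_nat)
qed

lemma exists_prime_power_value_iff:
  fixes p r a c :: nat
  assumes "prime p" "0 < r" "0 < a" "0 < c"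
    and c: "\<And>l. prime l \<Longrightarrow> l dvd c \<Longrightarrow> l < p"
  shows "(\<exists>q b. prime q \<and> r < q \<and> 0 < b \<and> p ^ a * c = q ^ (b - 1) * (q - r)) \<longleftrightarrow>
    prime (p ^ a * c + r) \<or> int p - int r = int c"
proof
  assume "\<exists>q b. prime q \<and> r < q \<and> 0 < b \<and> p ^ a * c = q ^ (b - 1) * (q - r)"
  then obtain q b where q: "prime q" "r < q" "0 < b" and eq: "p ^ a * c = q ^ (b - 1) * (q - r)"
    by blast
  show "prime (p ^ a * c + r) \<or> int p - int r = int c"
  proof (cases "b = 1")
    case True
    then show ?thesis using eq q by simp
  next
    case False
    then have "0 < b - 1"
      using q(3) by simp
    then have "q = p \<and> q - r = c"
      using prime_power_mult_diff_eq[OF assms(1) q(1) assms(2) q(2)] assms(3) c eq by metis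
    then show ?thesis using q(2) by auto
  qed
next
  assume "prime (p ^ a * c + r) \<or> int p - int r = int c"
  then show "\<exists>q b. prime q \<and> r < q \<and> 0 < b \<and> p ^ a * c = q ^ (b - 1) * (q - r)"
  proof
    assume "prime (p ^ a * c + r)"
    moreover have "0 < p ^ a * c"
      using assms(1,4) by (simp add: prime_gt_0_nat)
    ultimately show ?thesis
      by (intro exI[of _ "p ^ a * c + r"] exI[of _ 1]) simp
  next
    assume "int p - int r = int c"
    then have "r < p" "p - r = c"
      using \<open>0 < c\<close> by auto
    then show ?thesis
      using assms(1) by (intro exI[of _ p] exI[of _ "Suc a"]) simp
  qed
qed

lemma prime_dvd_prod_powers_less:
  fixes l m :: nat and p a :: "'a \<Rightarrow> nat"
  assumes "l dvd (\<Prod>i\<in>A. p i ^ a i)" "finite A" "prime l"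
    and "\<And>i. i \<in> A \<Longrightarrow> prime (p i) \<and> p i < m"
  shows "l < m"
proof -
  obtain i where "i \<in> A" "l dvd p i ^ a i"
    using assms(1-3) by (auto simp: prime_dvd_prod_iff)
  then show ?thesis
    using assms(3,4) by (metis prime_dvd_power primes_dvd_imp_eq)
qed

theorem theorem3p1:
  fixes r s n :: nat and p \<alpha> :: "nat \<Rightarrow> nat"
  assumes "r > 0" and "odd r"
    and "s \<ge> 1"
    and "\<And>i. i < s \<Longrightarrow> prime (p i) \<and> odd (p i)"
    and "\<And>i j. i < j \<Longrightarrow> j < s \<Longrightarrow> p i < p j"
    and "\<And>i. i < s \<Longrightarrow> \<alpha> i > 0"
    and "n = 2 * (\<Prod>i<s. p i ^ \<alpha> i)"
  shows "n \<in> G r \<longleftrightarrow>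
    composite (n + r) \<and>
    int (p (s - 1)) - int r \<noteq> int (2 * (\<Prod>i<s - 1. p i ^ \<alpha> i))"
proof -
  obtain t where s: "s = Suc t"
    using assms(3) by (cases s) auto
  define c where "c = 2 * (\<Prod>i<t. p i ^ \<alpha> i)"
  have n: "n = p t ^ \<alpha> t * c"
    using assms(7) by (simp add: s c_def)
  have pt: "prime (p t)" "odd (p t)" "0 < \<alpha> t"
    using assms(4,6) by (simp_all add: s)
  have "2 < p t"
    using prime_gt_1_nat[OF pt(1)] pt(2) by (cases "p t = 2") auto
  have c_primes: "l < p t" if l: "prime l" "l dvd c" for l
  proof (cases "l dvd 2")
    case True
    then show ?thesis
      using l(1) \<open>2 < p t\<close> primes_dvd_imp_eq two_is_prime_nat by blast
  next
    case False
    then have "l dvd (\<Prod>i<t. p i ^ \<alpha> i)"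
      using l by (simp add: c_def prime_dvd_mult_iff)
    then show ?thesis
      by (rule prime_dvd_prod_powers_less) (use l(1) assms(4,5) s in auto)
  qed
  have "odd (\<Prod>i<s. p i ^ \<alpha> i)"
    using assms(4,6) by (simp add: even_prod_iff)
  then have "\<not> 4 dvd n"
    using assms(7) by auto
  have "0 < c"
    using assms(4) by (auto simp: c_def s prime_gt_0_nat intro!: prod_pos)
  have "0 < n"
    using \<open>0 < c\<close> n pt by (simp add: prime_gt_0_nat)
  have "p t dvd n"
    using n pt by simp
  have "n \<in> G r \<longleftrightarrow> \<not> (\<exists>k>0. schemmel r k = n)"
    using \<open>0 < n\<close> by (simp add: G_def)
  also have "\<dots> \<longleftrightarrow> \<not> (\<exists>q b. prime q \<and> r < q \<and> 0 < b \<and> n = q ^ (b - 1) * (q - r))"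
    using in_schemmel_range_iff[OF assms(2) pt(1,2) \<open>p t dvd n\<close> \<open>\<not> 4 dvd n\<close> \<open>0 < n\<close>] by simp
  also have "\<dots> \<longleftrightarrow> \<not> (prime (n + r) \<or> int (p t) - int r = int c)"
    using exists_prime_power_value_iff[OF pt(1) assms(1) pt(3) \<open>0 < c\<close> c_primes] by (simp add: n)
  finally show ?thesis
    using assms(1) \<open>0 < n\<close> by (simp add: composite_def s c_def)
qed

end
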